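(* Let $\pi:L_{\mathcal F}\to L_{\mathcal G}$ satisfy (REG) and define for $X\in L_{\mathcal F}$ \[H(X):=\sup_{Q\in L^*_{\mathcal F}\cap\mathcal P}K(X,Q).\] Then: (i) $H$ is monotone increasing; (ii) $H(X\mathbf 1_A)\mathbf 1_A=H(X)\mathbf 1_A$ for every $A\in\mathcal G$ and $X\in L_{\mathcal F}$; (iii) for every $X\in L_{\mathcal F}$ there exist a sequence $(Q^k)_{k\ge1}\subseteq L^*_{\mathcal F}\cap\mathcal P$ and, for each $k$, a sequence $(\xi^{Q^k}_m)_{m\ge1}\subseteq L_{\mathcal F}$ with $E_{Q^k}[\xi^{Q^k}_m\mid\mathcal G]\ge_{Q^k}E_{Q^k}[X\mid\mathcal G]$, such that $\pi(\xi^{Q^k}_m)\downarrow K(X,Q^k)$ as $m\uparrow\infty$, $K(X,Q^k)\uparrow H(X)$ as $k\uparrow\infty$, and $H(X)=\lim_{k\to\infty}\lim_{m\to\infty}\pi(\xi^{Q^k}_m)$.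
   Context: Let $(\Omega,\mathcal F,\mathbb P)$ be a probability space, $\mathcal G\subseteq\mathcal F$ a sub-$\sigma$-algebra. (In)equalities hold $\mathbb P$-a.s. unless a measure is indicated ($\ge_Q$: $Q$-a.s.); $\sup,\inf$ are $\mathbb P$-essential. $L_{\mathcal F}\subseteq L^0(\Omega,\mathcal F,\mathbb P)$, $L_{\mathcal G}\subseteq L^0(\Omega,\mathcal G,\mathbb P)$ are vector lattices closed under multiplication by indicators of $\mathcal F$- (resp. $\mathcal G$-) measurable sets; the order continuous dual $L^*_{\mathcal F}$ of $(L_{\mathcal F},\ge)$ is a lattice contained in $L^1(\Omega,\mathcal F,\mathbb P)$ (functionals $X\mapsto E_{\mathbb P}[ZX]$), closed under multiplication by indicators of sets in $\mathcal F$. $\mathcal P$ = densities $dQ/d\mathbb P$ of probabilities $Q\ll\mathbb P$. (REG): $\pi(X\mathbf 1_A+Y\mathbf 1_{A^c})=\pi(X)\mathbf 1_A+\pi(Y)\mathbf 1_{A^c}$ for $A\in\mathcal G$. $K(X,Q):=\inf_{\xi\in L_{\mathcal F}}\{\pi(\xi)\mid E_Q[\xi\mid\mathcal G]\ge_Q E_Q[X\mid\mathcal G]\}$. *)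

theory Defs
  imports "HOL-Probability.Probability"
begin

text \<open>Random variables are represented by functions; (in)equalities are understood
  P-a.s. (M is the probability space, AE is always w.r.t. M unless another measure is shown).\<close>

definition ae_le :: "'a measure \<Rightarrow> ('a \<Rightarrow> real) \<Rightarrow> ('a \<Rightarrow> real) \<Rightarrow> bool" where
  "ae_le M X Y \<longleftrightarrow> (AE x in M. X x \<le> Y x)"

text \<open>L is (a set of representatives of) a vector lattice in L^0(Omega,S,P), closed under
  multiplication by indicators of S-measurable sets; being a set of equivalence classes,
  it is closed under P-a.s. equality.\<close>
definition vec_lattice :: "'a measure \<Rightarrow> 'a measure \<Rightarrow> ('a \<Rightarrow> real) set \<Rightarrow> bool" where
  "vec_lattice M S L \<longleftrightarrow>
     L \<subseteq> borel_measurable S \<and> (\<lambda>_. 0) \<in> L \<and>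
     (\<forall>X\<in>L. \<forall>Y\<in>L. (\<lambda>x. X x + Y x) \<in> L) \<and>
     (\<forall>c::real. \<forall>X\<in>L. (\<lambda>x. c * X x) \<in> L) \<and>
     (\<forall>X\<in>L. \<forall>Y\<in>L. (\<lambda>x. max (X x) (Y x)) \<in> L) \<and>
     (\<forall>X\<in>L. \<forall>A\<in>sets S. (\<lambda>x. X x * indicator A x) \<in> L) \<and>
     (\<forall>X\<in>L. \<forall>Y\<in>borel_measurable S. (AE x in M. X x = Y x) \<longrightarrow> Y \<in> L)"

text \<open>Order continuity of a functional on the lattice (L, a.s. order): for every downward
  directed D \<subseteq> L with infimum 0 in L (i.e. the net D decreases to 0), phi(X) converges to 0
  along the net D.\<close>
definition order_continuous_fun ::
  "'a measure \<Rightarrow> ('a \<Rightarrow> real) set \<Rightarrow> (('a \<Rightarrow> real) \<Rightarrow> real) \<Rightarrow> bool" where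
  "order_continuous_fun M L \<phi> \<longleftrightarrow>
     (\<forall>D. D \<subseteq> L \<and> D \<noteq> {} \<and>
          (\<forall>X\<in>D. \<forall>Y\<in>D. \<exists>W\<in>D. ae_le M W X \<and> ae_le M W Y) \<and>
          (\<forall>X\<in>D. ae_le M (\<lambda>_. 0) X) \<and>
          (\<forall>W\<in>L. (\<forall>X\<in>D. ae_le M W X) \<longrightarrow> ae_le M W (\<lambda>_. 0))
        \<longrightarrow> (\<forall>e>0. \<exists>X0\<in>D. \<forall>X\<in>D. ae_le M X X0 \<longrightarrow> \<bar>\<phi> X\<bar> < e))"

text \<open>Order continuous dual, identified with the L^1 densities Z of the functionals X \<mapsto> E[ZX].\<close>
definition oc_dual :: "'a measure \<Rightarrow> ('a \<Rightarrow> real) set \<Rightarrow> ('a \<Rightarrow> real) set" where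
  "oc_dual M L = {Z. integrable M Z \<and> (\<forall>X\<in>L. integrable M (\<lambda>x. Z x * X x)) \<and>
                      order_continuous_fun M L (\<lambda>X. \<integral>x. Z x * X x \<partial>M)}"

text \<open>The set \<P> of densities dQ/dP of probability measures Q \<ll> P.\<close>
definition prob_densities :: "'a measure \<Rightarrow> ('a \<Rightarrow> real) set" where
  "prob_densities M = {Z. Z \<in> borel_measurable M \<and> (AE x in M. 0 \<le> Z x) \<and> (\<integral>x. Z x \<partial>M) = 1}"

definition dens_meas :: "'a measure \<Rightarrow> ('a \<Rightarrow> real) \<Rightarrow> 'a measure" where
  "dens_meas M Z = density M (\<lambda>x. ennreal (Z x))"

definition is_ess_sup :: "'a measure \<Rightarrow> ('a \<Rightarrow> ereal) set \<Rightarrow> ('a \<Rightarrow> ereal) \<Rightarrow> bool" where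
  "is_ess_sup M S Y \<longleftrightarrow> Y \<in> borel_measurable M \<and> (\<forall>f\<in>S. AE x in M. f x \<le> Y x) \<and>
     (\<forall>Y'\<in>borel_measurable M. (\<forall>f\<in>S. AE x in M. f x \<le> Y' x) \<longrightarrow> (AE x in M. Y x \<le> Y' x))"

definition is_ess_inf :: "'a measure \<Rightarrow> ('a \<Rightarrow> ereal) set \<Rightarrow> ('a \<Rightarrow> ereal) \<Rightarrow> bool" where
  "is_ess_inf M S Y \<longleftrightarrow> Y \<in> borel_measurable M \<and> (\<forall>f\<in>S. AE x in M. Y x \<le> f x) \<and>
     (\<forall>Y'\<in>borel_measurable M. (\<forall>f\<in>S. AE x in M. Y' x \<le> f x) \<longrightarrow> (AE x in M. Y' x \<le> Y x))"

definition ess_sup_fam :: "'a measure \<Rightarrow> ('a \<Rightarrow> ereal) set \<Rightarrow> ('a \<Rightarrow> ereal)" where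
  "ess_sup_fam M S = (SOME Y. is_ess_sup M S Y)"

definition ess_inf_fam :: "'a measure \<Rightarrow> ('a \<Rightarrow> ereal) set \<Rightarrow> ('a \<Rightarrow> ereal)" where
  "ess_inf_fam M S = (SOME Y. is_ess_inf M S Y)"

definition Kfun :: "'a measure \<Rightarrow> 'a measure \<Rightarrow> (('a \<Rightarrow> real) \<Rightarrow> ('a \<Rightarrow> real)) \<Rightarrow>
    ('a \<Rightarrow> real) set \<Rightarrow> ('a \<Rightarrow> real) \<Rightarrow> ('a \<Rightarrow> real) \<Rightarrow> ('a \<Rightarrow> ereal)" where
  "Kfun M G \<pi> LF X Z = ess_inf_fam M
     {(\<lambda>x. ereal (\<pi> \<xi> x)) | \<xi>. \<xi> \<in> LF \<and>
        (AE x in dens_meas M Z. real_cond_exp (dens_meas M Z) G \<xi> x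
                                 \<ge> real_cond_exp (dens_meas M Z) G X x)}"

definition Hfun :: "'a measure \<Rightarrow> 'a measure \<Rightarrow> (('a \<Rightarrow> real) \<Rightarrow> ('a \<Rightarrow> real)) \<Rightarrow>
    ('a \<Rightarrow> real) set \<Rightarrow> ('a \<Rightarrow> real) \<Rightarrow> ('a \<Rightarrow> ereal)" where
  "Hfun M G \<pi> LF X = ess_sup_fam M
     {Kfun M G \<pi> LF X Z | Z. Z \<in> oc_dual M LF \<inter> prob_densities M}"

end

theory Submission
  imports Defs
begin

(*
  A downward directed family of random variables has its essential infimum as the a.s. limit
  of a decreasing sequence from the family: minimise the integral of a bounded strictly
  increasing transform over the family and use directedness to make a minimising sequence
  decrease. Testing E_Q[xi|G] >= E_Q[X|G] against the sets of G shows that admissible xi can be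
  pasted along any G-set, so by (REG) the values pi(xi) form a downward directed family (paste
  on the G-set where pi(xi1) <= pi(xi2)); this gives the inner sequences. Pasting two densities
  along the G-set where one K-value dominates and renormalising shows that the K(X,Q) form an
  upward directed family; this gives the outer sequence. Monotonicity and locality of H are
  inherited from those of K, which are obtained by pasting admissible xi once more.
*)

section \<open>Essential infima and suprema of directed families\<close>

definition squash :: "ereal \<Rightarrow> real" where
  "squash t = (if t = \<infinity> then 2 else if t = -\<infinity> then -2 else arctan (real_of_ereal t))"

lemma abs_squash_le: "\<bar>squash t\<bar> \<le> 2"
  using arctan_bounded[of "real_of_ereal t"] pi_less_4 by (auto simp: squash_def)

lemma squash_strict_mono:
  assumes "s < t"
  shows "squash s < squash t"
proof -
  have "-2 < arctan r \<and> arctan r < 2" for r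
    using arctan_bounded[of r] pi_less_4 by (auto simp: field_simps)
  with assms show ?thesis
    by (cases s; cases t) (auto simp: squash_def arctan_less_iff)
qed

lemma squash_less_iff [simp]: "squash s < squash t \<longleftrightarrow> s < t"
  by (metis not_less_iff_gr_or_eq order_less_asym squash_strict_mono)

lemma squash_le_iff [simp]: "squash s \<le> squash t \<longleftrightarrow> s \<le> t"
  by (metis not_le squash_less_iff)

lemma borel_measurable_squash [measurable]:
  assumes "f \<in> borel_measurable M"
  shows "(\<lambda>x. squash (f x)) \<in> borel_measurable M"
proof (rule borel_measurable_ereal_cases[OF assms])
  show "(\<lambda>x. squash (ereal (real_of_ereal (f x)))) \<in> borel_measurable M"
    using assms by (simp add: squash_def)
qed

lemma (in finite_measure) integrable_squash:
  "f \<in> borel_measurable M \<Longrightarrow> integrable M (\<lambda>x. squash (f x))"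
  by (rule integrable_const_bound[where B=2]) (auto simp: abs_squash_le)

lemma directed_below_decseq:
  fixes f :: "nat \<Rightarrow> 'a \<Rightarrow> 'b::order"
  assumes directed: "\<And>u v. u \<in> S \<Longrightarrow> v \<in> S \<Longrightarrow> \<exists>w\<in>S. AE x in M. w x \<le> u x \<and> w x \<le> v x"
    and f: "range f \<subseteq> S"
  obtains g where "range g \<subseteq> S" "AE x in M. decseq (\<lambda>n. g n x)" "\<And>n. AE x in M. g n x \<le> f n x"
proof -
  obtain d where d: "\<And>u v. u \<in> S \<Longrightarrow> v \<in> S \<Longrightarrow>
      d u v \<in> S \<and> (AE x in M. d u v x \<le> u x \<and> d u v x \<le> v x)"
    using directed by metis
  define g where "g = rec_nat (f 0) (\<lambda>n h. d h (f (Suc n)))"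
  have g_simps: "g 0 = f 0" "g (Suc n) = d (g n) (f (Suc n))" for n
    by (simp_all add: g_def)
  have gS: "g n \<in> S" for n
    using f d by (induction n) (auto simp: g_simps)
  have step: "AE x in M. g (Suc n) x \<le> g n x \<and> g (Suc n) x \<le> f (Suc n) x" for n
    using d[OF gS f[THEN subsetD, OF rangeI]] by (simp add: g_simps)
  have "AE x in M. \<forall>n. g (Suc n) x \<le> g n x"
    using step by (auto simp: AE_all_countable elim: eventually_mono)
  then have "AE x in M. decseq (\<lambda>n. g n x)"
    by eventually_elim (simp add: decseq_Suc_iff)
  moreover have "AE x in M. g n x \<le> f n x" for n
    using step[of "n - 1"] by (cases n) (auto simp: g_simps elim: eventually_mono)
  ultimately show thesis
    using gS that by blast
qed

lemma AE_eq_0_if_integral_less_inverse: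
  fixes f :: "'a \<Rightarrow> real"
  assumes "integrable M f" "\<And>n. integral\<^sup>L M f < 1 / Suc n" "\<And>x. 0 \<le> f x"
  shows "AE x in M. f x = 0"
proof -
  have "integral\<^sup>L M f \<le> 0"
    using assms(2) by (metis reals_Archimedean inverse_eq_divide less_asym not_le)
  then show ?thesis
    using integral_nonneg_eq_0_iff_AE[OF assms(1)] assms(3) by (simp add: antisym)
qed

lemma (in finite_measure) squash_minimising_decseq:
  fixes S :: "('a \<Rightarrow> ereal) set"
  assumes "S \<noteq> {}" and S_meas: "S \<subseteq> borel_measurable M"
    and directed: "\<And>u v. u \<in> S \<Longrightarrow> v \<in> S \<Longrightarrow> \<exists>w\<in>S. AE x in M. w x \<le> u x \<and> w x \<le> v x"
  obtains g where "range g \<subseteq> S" "AE x in M. decseq (\<lambda>n. g n x)"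
    "\<And>n u. u \<in> S \<Longrightarrow> (\<integral>x. squash (g n x) \<partial>M) < (\<integral>x. squash (u x) \<partial>M) + 1 / Suc n"
proof -
  define \<Phi> where "\<Phi> u = (\<integral>x. squash (u x) \<partial>M)" for u :: "'a \<Rightarrow> ereal"
  have \<Phi>_mono: "\<Phi> u \<le> \<Phi> v"
    if "u \<in> borel_measurable M" "v \<in> borel_measurable M" "AE x in M. u x \<le> v x" for u v
    unfolding \<Phi>_def using that by (intro integral_mono_AE) (auto simp: integrable_squash)
  define m where "m = (INF u\<in>S. \<Phi> u)"
  have bdd: "bdd_below (\<Phi> ` S)"
    by (rule bdd_belowI[of _ "\<Phi> (\<lambda>_. -\<infinity>)"]) (use S_meas \<Phi>_mono in auto)
  have m_le: "m \<le> \<Phi> u" if "u \<in> S" for u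
    unfolding m_def using bdd that by (rule cINF_lower)
  have "\<exists>u\<in>S. \<Phi> u < m + 1 / Suc n" for n
    using cInf_lessD[of "\<Phi> ` S" "m + 1 / Suc n"] \<open>S \<noteq> {}\<close> unfolding m_def by fastforce
  then obtain f where f_S: "\<And>n. f n \<in> S" and f_lt: "\<And>n. \<Phi> (f n) < m + 1 / Suc n"
    by metis
  obtain g where g: "range g \<subseteq> S" "AE x in M. decseq (\<lambda>n. g n x)"
    and g_le_f: "\<And>n. AE x in M. g n x \<le> f n x"
    using directed_below_decseq[OF directed, of f] f_S by blast
  have "\<Phi> (g n) < \<Phi> u + 1 / Suc n" if "u \<in> S" for n u
  proof -
    have "\<Phi> (g n) \<le> \<Phi> (f n)"
      using g(1) f_S S_meas by (intro \<Phi>_mono g_le_f) auto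
    then show ?thesis
      using f_lt[of n] m_le[OF that] by simp
  qed
  with g show thesis
    unfolding \<Phi>_def by (rule that)
qed

lemma (in finite_measure) INF_minimising_le:
  fixes S :: "('a \<Rightarrow> ereal) set"
  assumes S_meas: "S \<subseteq> borel_measurable M"
    and directed: "\<And>u v. u \<in> S \<Longrightarrow> v \<in> S \<Longrightarrow> \<exists>w\<in>S. AE x in M. w x \<le> u x \<and> w x \<le> v x"
    and g: "range g \<subseteq> S"
    and minimising: "\<And>n u. u \<in> S \<Longrightarrow>
      (\<integral>x. squash (g n x) \<partial>M) < (\<integral>x. squash (u x) \<partial>M) + 1 / Suc n"
    and u: "u \<in> S"
  shows "AE x in M. (INF n. g n x) \<le> u x"
proof -
  have g_meas: "g n \<in> borel_measurable M" for n
    using g S_meas by auto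
  have u_meas: "u \<in> borel_measurable M"
    using u S_meas by auto
  have INF_meas: "(\<lambda>x. INF n. g n x) \<in> borel_measurable M"
    using g_meas by measurable
  define gap where "gap x = max 0 (squash (INF n. g n x) - squash (u x))" for x
  have gap_int: "integrable M gap"
    unfolding gap_def using INF_meas u_meas by (auto intro!: integrable_squash)
  have "integral\<^sup>L M gap < 1 / Suc n" for n
  proof -
    obtain w where w: "w \<in> S" "AE x in M. w x \<le> u x \<and> w x \<le> g n x"
      using directed[OF u, of "g n"] g by auto
    have "AE x in M. gap x \<le> squash (g n x) - squash (w x)"
      using w(2)
    proof eventually_elim
      case (elim x)
      moreover have "(INF n. g n x) \<le> g n x"
        by (rule INF_lower) simp
      ultimately show ?case
        by (auto simp: gap_def simp flip: squash_le_iff)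
    qed
    then have "integral\<^sup>L M gap \<le> (\<integral>x. squash (g n x) \<partial>M) - (\<integral>x. squash (w x) \<partial>M)"
      using g_meas w(1) S_meas gap_int
      by (subst Bochner_Integration.integral_diff[symmetric])
        (auto intro!: integral_mono_AE integrable_squash)
    also have "\<dots> < 1 / Suc n"
      using minimising[OF w(1), of n] by simp
    finally show ?thesis .
  qed
  with gap_int have "AE x in M. gap x = 0"
    by (rule AE_eq_0_if_integral_less_inverse) (simp add: gap_def)
  then show ?thesis
    by eventually_elim (simp add: gap_def flip: squash_le_iff)
qed

lemma (in finite_measure) ess_inf_of_directed:
  fixes S :: "('a \<Rightarrow> ereal) set"
  assumes "S \<noteq> {}" and S_meas: "S \<subseteq> borel_measurable M"
    and directed: "\<And>u v. u \<in> S \<Longrightarrow> v \<in> S \<Longrightarrow> \<exists>w\<in>S. AE x in M. w x \<le> u x \<and> w x \<le> v x"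
  obtains g where "range g \<subseteq> S" "AE x in M. decseq (\<lambda>n. g n x)"
    "is_ess_inf M S (\<lambda>x. INF n. g n x)"
proof -
  obtain g where g: "range g \<subseteq> S" "AE x in M. decseq (\<lambda>n. g n x)"
    and minimising: "\<And>n u. u \<in> S \<Longrightarrow>
      (\<integral>x. squash (g n x) \<partial>M) < (\<integral>x. squash (u x) \<partial>M) + 1 / Suc n"
    using squash_minimising_decseq[OF assms] by blast
  have "(\<lambda>x. INF n. g n x) \<in> borel_measurable M"
    using g(1) S_meas by (intro borel_measurable_INF) auto
  moreover have "AE x in M. (INF n. g n x) \<le> u x" if "u \<in> S" for u
    using S_meas directed g(1) minimising that by (rule INF_minimising_le)
  moreover have "AE x in M. Y x \<le> (INF n. g n x)"
    if "\<forall>u\<in>S. AE x in M. Y x \<le> u x" for Y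
  proof -
    have "AE x in M. \<forall>n. Y x \<le> g n x"
      using that g(1) by (auto simp: AE_all_countable)
    then show ?thesis
      by eventually_elim (simp add: le_INF_iff)
  qed
  ultimately have "is_ess_inf M S (\<lambda>x. INF n. g n x)"
    unfolding is_ess_inf_def by blast
  with g show thesis
    by (rule that)
qed

lemma is_ess_inf_unique:
  assumes "is_ess_inf M S Y" "is_ess_inf M S W"
  shows "AE x in M. Y x = W x"
proof -
  have "AE x in M. Y x \<le> W x" "AE x in M. W x \<le> Y x"
    using assms unfolding is_ess_inf_def by blast+
  then show ?thesis
    by eventually_elim (rule antisym)
qed

lemma is_ess_inf_ess_inf_fam:
  assumes "is_ess_inf M S Y"
  shows "is_ess_inf M S (ess_inf_fam M S)"
  unfolding ess_inf_fam_def using assms by (rule someI[of "is_ess_inf M S"])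

lemma is_ess_sup_ess_sup_fam:
  assumes "is_ess_sup M S Y"
  shows "is_ess_sup M S (ess_sup_fam M S)"
  unfolding ess_sup_fam_def using assms by (rule someI[of "is_ess_sup M S"])

lemma is_ess_sup_iff_is_ess_inf_uminus:
  "is_ess_sup M S Y \<longleftrightarrow> is_ess_inf M ((\<lambda>f x. - f x) ` S) (\<lambda>x. - Y x)"
proof -
  have all_uminus: "(\<forall>W\<in>borel_measurable M. P W) \<longleftrightarrow> (\<forall>V\<in>borel_measurable M. P (\<lambda>x. - V x))"
    for P :: "('a \<Rightarrow> ereal) \<Rightarrow> bool"
  proof
    assume P_uminus: "\<forall>V\<in>borel_measurable M. P (\<lambda>x. - V x)"
    show "\<forall>W\<in>borel_measurable M. P W"
    proof
      fix W :: "'a \<Rightarrow> ereal"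
      assume "W \<in> borel_measurable M"
      then show "P W"
        using P_uminus[rule_format, of "\<lambda>x. - W x"] by simp
    qed
  qed simp
  have "(\<forall>W\<in>borel_measurable M. (\<forall>f\<in>S. AE x in M. W x \<le> - f x) \<longrightarrow> (AE x in M. W x \<le> - Y x))
    \<longleftrightarrow> (\<forall>V\<in>borel_measurable M. (\<forall>f\<in>S. AE x in M. f x \<le> V x) \<longrightarrow> (AE x in M. Y x \<le> V x))"
    by (subst all_uminus) simp
  then show ?thesis
    unfolding is_ess_sup_def is_ess_inf_def by simp
qed

lemma is_ess_inf_le_on:
  assumes Y: "is_ess_inf M S Y" and W: "is_ess_inf M T W" and B[measurable]: "B \<in> sets M"
    and smaller: "\<And>u. u \<in> S \<Longrightarrow> \<exists>v\<in>T. AE x in M. x \<in> B \<longrightarrow> v x \<le> u x"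
  shows "AE x in M. x \<in> B \<longrightarrow> W x \<le> Y x"
proof -
  define W' where "W' x = (if x \<in> B then W x else -\<infinity>)" for x
  have [measurable]: "W \<in> borel_measurable M"
    using W unfolding is_ess_inf_def by blast
  have "W' \<in> borel_measurable M"
    unfolding W'_def by measurable
  moreover have "AE x in M. W' x \<le> u x" if u: "u \<in> S" for u
  proof -
    obtain v where "v \<in> T" and v: "AE x in M. x \<in> B \<longrightarrow> v x \<le> u x"
      using smaller[OF u] by blast
    then have "AE x in M. W x \<le> v x"
      using W unfolding is_ess_inf_def by blast
    with v show ?thesis
      by eventually_elim (auto simp: W'_def)
  qed
  ultimately have "AE x in M. W' x \<le> Y x"
    using Y unfolding is_ess_inf_def by blast
  then show ?thesis
    by eventually_elim (auto simp: W'_def)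
qed

lemma is_ess_sup_le_on:
  assumes Y: "is_ess_sup M S Y" and W: "is_ess_sup M T W" and B: "B \<in> sets M"
    and larger: "\<And>u. u \<in> S \<Longrightarrow> \<exists>v\<in>T. AE x in M. x \<in> B \<longrightarrow> u x \<le> v x"
  shows "AE x in M. x \<in> B \<longrightarrow> Y x \<le> W x"
proof -
  have "AE x in M. x \<in> B \<longrightarrow> - W x \<le> - Y x"
  proof (rule is_ess_inf_le_on[OF Y[unfolded is_ess_sup_iff_is_ess_inf_uminus]
        W[unfolded is_ess_sup_iff_is_ess_inf_uminus] B])
    fix u' assume "u' \<in> (\<lambda>f x. - f x) ` S"
    then obtain u where "u \<in> S" "u' = (\<lambda>x. - u x)"
      by blast
    with larger show "\<exists>v'\<in>(\<lambda>f x. - f x) ` T. AE x in M. x \<in> B \<longrightarrow> v' x \<le> u' x"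
      by fastforce
  qed
  then show ?thesis
    by simp
qed

lemma (in finite_measure) ess_inf_fam_directed:
  fixes S :: "('a \<Rightarrow> ereal) set"
  assumes "S \<noteq> {}" "S \<subseteq> borel_measurable M"
    and "\<And>u v. u \<in> S \<Longrightarrow> v \<in> S \<Longrightarrow> \<exists>w\<in>S. AE x in M. w x \<le> u x \<and> w x \<le> v x"
  obtains g where "range g \<subseteq> S" "is_ess_inf M S (ess_inf_fam M S)"
    "AE x in M. decseq (\<lambda>n. g n x) \<and> ess_inf_fam M S x = (INF n. g n x)"
proof -
  obtain g where g: "range g \<subseteq> S" and g_dec: "AE x in M. decseq (\<lambda>n. g n x)"
    and inf: "is_ess_inf M S (\<lambda>x. INF n. g n x)"
    using ess_inf_of_directed[OF assms] by blast
  have fam: "is_ess_inf M S (ess_inf_fam M S)"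
    using inf by (rule is_ess_inf_ess_inf_fam)
  have "AE x in M. decseq (\<lambda>n. g n x) \<and> ess_inf_fam M S x = (INF n. g n x)"
    using g_dec is_ess_inf_unique[OF fam inf] by eventually_elim simp
  with g fam show thesis
    by (rule that)
qed

lemma (in finite_measure) ess_sup_fam_directed:
  fixes S :: "('a \<Rightarrow> ereal) set"
  assumes "S \<noteq> {}" and S_meas: "S \<subseteq> borel_measurable M"
    and directed: "\<And>u v. u \<in> S \<Longrightarrow> v \<in> S \<Longrightarrow> \<exists>w\<in>S. AE x in M. u x \<le> w x \<and> v x \<le> w x"
  obtains g where "range g \<subseteq> S" "is_ess_sup M S (ess_sup_fam M S)"
    "AE x in M. incseq (\<lambda>n. g n x) \<and> ess_sup_fam M S x = (SUP n. g n x)"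
proof -
  let ?neg = "\<lambda>f x. - f x :: ereal"
  have "?neg ` S \<noteq> {}" "?neg ` S \<subseteq> borel_measurable M"
    using assms(1) S_meas by auto
  moreover have "\<exists>w\<in>?neg ` S. AE x in M. w x \<le> u x \<and> w x \<le> v x"
    if uv: "u \<in> ?neg ` S" "v \<in> ?neg ` S" for u v
  proof -
    obtain u' v' where "u' \<in> S" "v' \<in> S" "u = ?neg u'" "v = ?neg v'"
      using uv by blast
    with directed[of u' v'] show ?thesis
      by auto
  qed
  ultimately obtain h where h: "range h \<subseteq> ?neg ` S" and h_dec: "AE x in M. decseq (\<lambda>n. h n x)"
    and inf: "is_ess_inf M (?neg ` S) (\<lambda>x. INF n. h n x)"
    by (rule ess_inf_of_directed)
  define g where "g n = ?neg (h n)" for n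
  have "range g \<subseteq> S"
    using h by (auto simp: g_def)
  have "(\<lambda>x. - (SUP n. g n x)) = (\<lambda>x. INF n. h n x)"
    by (simp add: g_def ereal_SUP_uminus_eq)
  then have sup: "is_ess_sup M S (\<lambda>x. SUP n. g n x)"
    using inf by (simp add: is_ess_sup_iff_is_ess_inf_uminus)
  have fam: "is_ess_sup M S (ess_sup_fam M S)"
    using sup by (rule is_ess_sup_ess_sup_fam)
  have "AE x in M. - ess_sup_fam M S x = - (SUP n. g n x)"
    using fam sup unfolding is_ess_sup_iff_is_ess_inf_uminus by (rule is_ess_inf_unique)
  then have "AE x in M. incseq (\<lambda>n. g n x) \<and> ess_sup_fam M S x = (SUP n. g n x)"
    using h_dec by eventually_elim (simp add: g_def decseq_def incseq_def)
  with \<open>range g \<subseteq> S\<close> fam show thesis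
    by (rule that)
qed

section \<open>Conditional expectations under a density\<close>

lemma (in sigma_finite_subalgebra) AE_real_cond_exp_nonneg_iff:
  assumes f: "integrable M f"
  shows "(AE x in M. 0 \<le> real_cond_exp M F f x) \<longleftrightarrow> (\<forall>A\<in>sets F. 0 \<le> (\<integral>x\<in>A. f x \<partial>M))"
proof
  assume nonneg: "AE x in M. 0 \<le> real_cond_exp M F f x"
  show "\<forall>A\<in>sets F. 0 \<le> (\<integral>x\<in>A. f x \<partial>M)"
  proof
    fix A assume "A \<in> sets F"
    have "0 \<le> (\<integral>x\<in>A. real_cond_exp M F f x \<partial>M)"
      unfolding set_lebesgue_integral_def using nonneg
      by (intro integral_nonneg_AE) (auto elim: eventually_mono)
    also have "\<dots> = (\<integral>x\<in>A. f x \<partial>M)"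
      using real_cond_exp_intA[OF f \<open>A \<in> sets F\<close>] by simp
    finally show "0 \<le> (\<integral>x\<in>A. f x \<partial>M)" .
  qed
next
  assume nonneg: "\<forall>A\<in>sets F. 0 \<le> (\<integral>x\<in>A. f x \<partial>M)"
  let ?D = "real_cond_exp M F f"
  define A where "A = {x \<in> space M. ?D x < 0}"
  have "A = {x \<in> space F. ?D x < 0}"
    using subalg by (simp add: A_def subalgebra_def)
  also have "\<dots> \<in> sets F"
    by measurable
  finally have A: "A \<in> sets F" .
  then have A_M: "A \<in> sets M"
    using subalg by (auto simp: subalgebra_def)
  define g where "g x = - (indicator A x * ?D x)" for x
  have g_nonneg: "0 \<le> g x" for x
    by (auto simp: g_def A_def indicator_def)
  have g_int: "integrable M g"
    unfolding g_def using integrable_mult_indicator[OF A_M real_cond_exp_int(1)[OF f]]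
    by (intro integrable_minus) simp
  have "integral\<^sup>L M g = - (\<integral>x\<in>A. f x \<partial>M)"
    unfolding g_def using real_cond_exp_intA[OF f A] by (simp add: set_lebesgue_integral_def)
  then have "integral\<^sup>L M g \<le> 0"
    using nonneg A by simp
  then have "integral\<^sup>L M g = 0"
    using g_nonneg by (simp add: antisym integral_nonneg)
  then have "AE x in M. g x = 0"
    using integral_nonneg_eq_0_iff_AE[OF g_int] g_nonneg by simp
  then show "AE x in M. 0 \<le> ?D x"
    by (auto simp: g_def A_def indicator_def elim!: eventually_mono)
qed

lemma integrable_prob_density:
  assumes "Z \<in> prob_densities M"
  shows "integrable M Z"
  using assms not_integrable_integral_eq[of M Z] by (auto simp: prob_densities_def)

lemma prob_space_dens_meas:
  assumes Z: "Z \<in> prob_densities M"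
  shows "prob_space (dens_meas M Z)"
proof
  have [measurable]: "Z \<in> borel_measurable M" and Z_nonneg: "AE x in M. 0 \<le> Z x"
    using Z by (auto simp: prob_densities_def)
  have "emeasure (dens_meas M Z) (space (dens_meas M Z))
      = (\<integral>\<^sup>+x. ennreal (Z x) * indicator (space M) x \<partial>M)"
    by (simp add: dens_meas_def emeasure_density)
  also have "\<dots> = (\<integral>\<^sup>+x. ennreal (Z x) \<partial>M)"
    by (rule nn_integral_cong) simp
  also have "\<dots> = ennreal (\<integral>x. Z x \<partial>M)"
    using integrable_prob_density[OF Z] Z_nonneg by (rule nn_integral_eq_integral)
  also have "\<dots> = 1"
    using Z by (simp add: prob_densities_def)
  finally show "emeasure (dens_meas M Z) (space (dens_meas M Z)) = 1" .
qed

lemma sigma_finite_subalgebra_dens_meas: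
  assumes "subalgebra M G" "Z \<in> prob_densities M"
  shows "sigma_finite_subalgebra (dens_meas M Z) G"
proof (rule finite_measure_subalgebra_is_sigma_finite)
  interpret prob_space "dens_meas M Z"
    using assms(2) by (rule prob_space_dens_meas)
  show "finite_measure_subalgebra (dens_meas M Z) G"
    using assms(1) by unfold_locales (simp add: subalgebra_def dens_meas_def)
qed

lemma integrable_dens_meas:
  assumes "Z \<in> prob_densities M" "f \<in> borel_measurable M" "integrable M (\<lambda>x. Z x * f x)"
  shows "integrable (dens_meas M Z) f"
  using assms integrable_density[of f M Z] by (simp add: dens_meas_def prob_densities_def)

lemma set_integral_dens_meas:
  assumes "Z \<in> prob_densities M" "f \<in> borel_measurable M" "A \<in> sets M"
  shows "(\<integral>x\<in>A. f x \<partial>dens_meas M Z) = (\<integral>x. Z x * f x * indicator A x \<partial>M)"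
proof -
  have "(\<integral>x\<in>A. f x \<partial>dens_meas M Z) = (\<integral>x. Z x *\<^sub>R (indicator A x *\<^sub>R f x) \<partial>M)"
    unfolding set_lebesgue_integral_def dens_meas_def
    using assms by (intro integral_density) (auto simp: prob_densities_def)
  then show ?thesis
    by (simp add: mult_ac)
qed

lemma AE_dens_meas_real_cond_exp_le_iff:
  assumes G: "subalgebra M G" and Z: "Z \<in> prob_densities M"
    and X: "X \<in> borel_measurable M" "integrable M (\<lambda>x. Z x * X x)"
    and \<xi>: "\<xi> \<in> borel_measurable M" "integrable M (\<lambda>x. Z x * \<xi> x)"
  shows "(AE x in dens_meas M Z. real_cond_exp (dens_meas M Z) G \<xi> x
                                  \<ge> real_cond_exp (dens_meas M Z) G X x)
     \<longleftrightarrow> (\<forall>A\<in>sets G. 0 \<le> (\<integral>x. Z x * (\<xi> x - X x) * indicator A x \<partial>M))"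
proof -
  let ?Q = "dens_meas M Z"
  interpret sigma_finite_subalgebra ?Q G
    using G Z by (rule sigma_finite_subalgebra_dens_meas)
  have int: "integrable ?Q X" "integrable ?Q \<xi>"
    using integrable_dens_meas Z X \<xi> by blast+
  have "AE x in ?Q. (real_cond_exp ?Q G \<xi> x \<ge> real_cond_exp ?Q G X x)
                   = (0 \<le> real_cond_exp ?Q G (\<lambda>x. \<xi> x - X x) x)"
    using real_cond_exp_diff[OF int(2,1)] by eventually_elim simp
  then have "(AE x in ?Q. real_cond_exp ?Q G \<xi> x \<ge> real_cond_exp ?Q G X x)
      \<longleftrightarrow> (AE x in ?Q. 0 \<le> real_cond_exp ?Q G (\<lambda>x. \<xi> x - X x) x)"
    by (rule eventually_subst)
  also have "\<dots> \<longleftrightarrow> (\<forall>A\<in>sets G. 0 \<le> (\<integral>x\<in>A. \<xi> x - X x \<partial>?Q))"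
    using int by (intro AE_real_cond_exp_nonneg_iff) auto
  also have "\<dots> \<longleftrightarrow> (\<forall>A\<in>sets G. 0 \<le> (\<integral>x. Z x * (\<xi> x - X x) * indicator A x \<partial>M))"
    using G X(1) \<xi>(1) by (simp add: set_integral_dens_meas[OF Z] subalgebra_def subset_eq)
  finally show ?thesis .
qed

section \<open>Pasting and regular maps\<close>

lemma
  assumes "vec_lattice M S L"
  shows vec_lattice_borel_measurable: "X \<in> L \<Longrightarrow> X \<in> borel_measurable S"
    and vec_lattice_zero: "(\<lambda>_. 0) \<in> L"
    and vec_lattice_add: "X \<in> L \<Longrightarrow> Y \<in> L \<Longrightarrow> (\<lambda>x. X x + Y x) \<in> L"
    and vec_lattice_cmult: "X \<in> L \<Longrightarrow> (\<lambda>x. c * X x) \<in> L"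
    and vec_lattice_mult_indicator: "X \<in> L \<Longrightarrow> A \<in> sets S \<Longrightarrow> (\<lambda>x. X x * indicator A x) \<in> L"
  using assms unfolding vec_lattice_def by blast+

definition paste :: "'a measure \<Rightarrow> 'a set \<Rightarrow> ('a \<Rightarrow> real) \<Rightarrow> ('a \<Rightarrow> real) \<Rightarrow> 'a \<Rightarrow> real" where
  "paste M B X Y = (\<lambda>x. X x * indicator B x + Y x * indicator (space M - B) x)"

lemma paste_in_space [simp]:
  "x \<in> space M \<Longrightarrow> paste M B X Y x = (if x \<in> B then X x else Y x)"
  by (simp add: paste_def)

lemma borel_measurable_paste [measurable]:
  assumes "X \<in> borel_measurable M" "Y \<in> borel_measurable M" "B \<in> sets M"
  shows "paste M B X Y \<in> borel_measurable M"
  unfolding paste_def using assms by measurable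

lemma vec_lattice_paste:
  assumes "vec_lattice M M L" "X \<in> L" "Y \<in> L" "B \<in> sets M"
  shows "paste M B X Y \<in> L"
  unfolding paste_def using assms
  by (intro vec_lattice_add vec_lattice_mult_indicator) auto

locale regular_map =
  fixes M G :: "'a measure" and LF :: "('a \<Rightarrow> real) set"
    and \<pi> :: "('a \<Rightarrow> real) \<Rightarrow> 'a \<Rightarrow> real"
  assumes prob: "prob_space M"
    and subalg: "subalgebra M G"
    and lattice_LF: "vec_lattice M M LF"
    and lattice_dual: "vec_lattice M M (oc_dual M LF)"
    and dual_probs_nonempty: "oc_dual M LF \<inter> prob_densities M \<noteq> {}"
    and measurable_\<pi>: "\<And>X. X \<in> LF \<Longrightarrow> \<pi> X \<in> borel_measurable G"
    and REG: "\<And>A X Y. A \<in> sets G \<Longrightarrow> X \<in> LF \<Longrightarrow> Y \<in> LF \<Longrightarrow>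
      AE x in M. \<pi> (paste M A X Y) x = paste M A (\<pi> X) (\<pi> Y) x"
begin

sublocale prob_space M
  by (rule prob)

abbreviation dual_probs :: "('a \<Rightarrow> real) set" where
  "dual_probs \<equiv> oc_dual M LF \<inter> prob_densities M"

abbreviation K :: "('a \<Rightarrow> real) \<Rightarrow> ('a \<Rightarrow> real) \<Rightarrow> 'a \<Rightarrow> ereal" where
  "K X Z \<equiv> Kfun M G \<pi> LF X Z"

abbreviation H :: "('a \<Rightarrow> real) \<Rightarrow> 'a \<Rightarrow> ereal" where
  "H X \<equiv> Hfun M G \<pi> LF X"

lemma sets_G_sets_M: "A \<in> sets G \<Longrightarrow> A \<in> sets M"
  using subalg by (auto simp: subalgebra_def)

lemma space_G: "space G = space M"
  using subalg by (simp add: subalgebra_def)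

lemma LF_borel_measurable: "X \<in> LF \<Longrightarrow> X \<in> borel_measurable M"
  using lattice_LF by (rule vec_lattice_borel_measurable)

lemma
  assumes "Z \<in> dual_probs"
  shows dual_probs_borel_measurable: "Z \<in> borel_measurable M"
    and dual_probs_nonneg: "AE x in M. 0 \<le> Z x"
  using assms by (auto simp: prob_densities_def)

lemma borel_measurable_\<pi>: "X \<in> LF \<Longrightarrow> \<pi> X \<in> borel_measurable M"
  using measurable_\<pi> measurable_from_subalg[OF subalg] by blast

lemma \<pi>_paste_on:
  assumes "A \<in> sets G" "X \<in> LF" "Y \<in> LF"
  shows "AE x in M. (x \<in> A \<longrightarrow> \<pi> (paste M A X Y) x = \<pi> X x)
                  \<and> (x \<notin> A \<longrightarrow> \<pi> (paste M A X Y) x = \<pi> Y x)"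
  using REG[OF assms] AE_space by eventually_elim auto

lemma dual_probs_integrable:
  assumes "Z \<in> dual_probs" "X \<in> LF"
  shows "integrable M (\<lambda>x. Z x * X x)"
  using assms by (simp add: oc_dual_def)

text \<open>Admissibility of \<open>\<xi>\<close> in the infimum defining \<open>K(X, Q)\<close>, \<open>dQ = Z dP\<close>: the constraint
  \<open>E\<^sub>Q[\<xi>|G] \<ge> E\<^sub>Q[X|G]\<close> tested against the sets of \<open>G\<close>.\<close>

definition cond_dominates :: "('a \<Rightarrow> real) \<Rightarrow> ('a \<Rightarrow> real) \<Rightarrow> ('a \<Rightarrow> real) \<Rightarrow> bool" where
  "cond_dominates Z \<xi> X \<longleftrightarrow> (\<forall>A\<in>sets G. 0 \<le> (\<integral>x. Z x * (\<xi> x - X x) * indicator A x \<partial>M))"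

lemma AE_cond_exp_ge_iff_cond_dominates:
  assumes "Z \<in> dual_probs" "X \<in> LF" "\<xi> \<in> LF"
  shows "(AE x in dens_meas M Z. real_cond_exp (dens_meas M Z) G \<xi> x
                                  \<ge> real_cond_exp (dens_meas M Z) G X x)
     \<longleftrightarrow> cond_dominates Z \<xi> X"
  unfolding cond_dominates_def using assms
  by (intro AE_dens_meas_real_cond_exp_le_iff subalg dual_probs_integrable
        LF_borel_measurable) auto

lemma integrable_dominance_gap:
  assumes "Z \<in> dual_probs" "\<xi> \<in> LF" "X \<in> LF" "A \<in> sets M"
  shows "integrable M (\<lambda>x. Z x * (\<xi> x - X x) * indicator A x)"
proof -
  have "integrable M (\<lambda>x. Z x * \<xi> x - Z x * X x)"
    using dual_probs_integrable[OF assms(1,2)] dual_probs_integrable[OF assms(1,3)]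
    by (rule Bochner_Integration.integrable_diff)
  then have "integrable M (\<lambda>x. indicator A x *\<^sub>R (Z x * \<xi> x - Z x * X x))"
    using assms(4) by (intro integrable_mult_indicator)
  then show ?thesis
    by (simp add: right_diff_distrib mult.commute)
qed

lemma cond_dominates_refl: "cond_dominates Z X X"
  by (simp add: cond_dominates_def)

lemma cond_dominates_paste:
  assumes Z: "Z \<in> dual_probs" and mem: "X \<in> LF" "\<xi>\<^sub>1 \<in> LF" "\<xi>\<^sub>2 \<in> LF" and B: "B \<in> sets G"
    and "cond_dominates Z \<xi>\<^sub>1 X" "cond_dominates Z \<xi>\<^sub>2 X"
  shows "cond_dominates Z (paste M B \<xi>\<^sub>1 \<xi>\<^sub>2) X"
  unfolding cond_dominates_def
proof
  fix A assume A: "A \<in> sets G"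
  have sets: "A \<inter> B \<in> sets G" "A \<inter> (space M - B) \<in> sets G"
    using A B by (auto simp flip: space_G)
  have "(\<integral>x. Z x * (paste M B \<xi>\<^sub>1 \<xi>\<^sub>2 x - X x) * indicator A x \<partial>M)
      = (\<integral>x. Z x * (\<xi>\<^sub>1 x - X x) * indicator (A \<inter> B) x
            + Z x * (\<xi>\<^sub>2 x - X x) * indicator (A \<inter> (space M - B)) x \<partial>M)"
    by (rule Bochner_Integration.integral_cong) (auto simp: paste_def indicator_def algebra_simps)
  also have "\<dots> = (\<integral>x. Z x * (\<xi>\<^sub>1 x - X x) * indicator (A \<inter> B) x \<partial>M)
                + (\<integral>x. Z x * (\<xi>\<^sub>2 x - X x) * indicator (A \<inter> (space M - B)) x \<partial>M)"
    using sets by (intro Bochner_Integration.integral_add integrable_dominance_gap Z mem sets_G_sets_M)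
  also have "0 \<le> \<dots>"
    using assms(6,7) sets unfolding cond_dominates_def by simp
  finally show "0 \<le> (\<integral>x. Z x * (paste M B \<xi>\<^sub>1 \<xi>\<^sub>2 x - X x) * indicator A x \<partial>M)" .
qed

lemma cond_dominates_paste_rescaled:
  assumes Z: "Z \<in> dual_probs" "Z' \<in> dual_probs" and mem: "X \<in> LF" "\<xi> \<in> LF"
    and B: "B \<in> sets G" and "0 \<le> c" and Z'_eq: "AE x in M. x \<in> B \<longrightarrow> Z' x = c * Z x"
    and "cond_dominates Z \<xi> X"
  shows "cond_dominates Z' (paste M B \<xi> X) X"
  unfolding cond_dominates_def
proof
  fix A assume A: "A \<in> sets G"
  have [measurable]: "A \<in> sets M" "B \<in> sets M" "Z \<in> borel_measurable M" "Z' \<in> borel_measurable M"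
    "X \<in> borel_measurable M" "\<xi> \<in> borel_measurable M"
    using A B Z mem by (auto intro: sets_G_sets_M dual_probs_borel_measurable LF_borel_measurable)
  have "AE x in M. Z' x * (paste M B \<xi> X x - X x) * indicator A x
                  = c * (Z x * (\<xi> x - X x) * indicator (A \<inter> B) x)"
    using Z'_eq AE_space by eventually_elim (simp add: indicator_def)
  then have "(\<integral>x. Z' x * (paste M B \<xi> X x - X x) * indicator A x \<partial>M)
      = (\<integral>x. c * (Z x * (\<xi> x - X x) * indicator (A \<inter> B) x) \<partial>M)"
    by (intro integral_cong_AE) measurable
  also have "\<dots> = c * (\<integral>x. Z x * (\<xi> x - X x) * indicator (A \<inter> B) x \<partial>M)"
    by simp
  also have "0 \<le> \<dots>"
    using assms(6,8) A B unfolding cond_dominates_def by simp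
  finally show "0 \<le> (\<integral>x. Z' x * (paste M B \<xi> X x - X x) * indicator A x \<partial>M)" .
qed

lemma cond_dominates_antimono:
  assumes Z: "Z \<in> dual_probs" and mem: "X \<in> LF" "Y \<in> LF" "\<xi> \<in> LF"
    and le: "AE x in M. X x \<le> Y x" and "cond_dominates Z \<xi> Y"
  shows "cond_dominates Z \<xi> X"
  unfolding cond_dominates_def
proof
  fix A assume A: "A \<in> sets G"
  have "0 \<le> (\<integral>x. Z x * (\<xi> x - Y x) * indicator A x \<partial>M)"
    using assms(6) A unfolding cond_dominates_def by blast
  also have "\<dots> \<le> (\<integral>x. Z x * (\<xi> x - X x) * indicator A x \<partial>M)"
  proof (rule integral_mono_AE)
    show "AE x in M. Z x * (\<xi> x - Y x) * indicator A x \<le> Z x * (\<xi> x - X x) * indicator A x"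
      using le dual_probs_nonneg[OF Z]
      by eventually_elim (auto simp: indicator_def intro!: mult_left_mono)
  qed (use integrable_dominance_gap Z mem sets_G_sets_M[OF A] in blast)+
  finally show "0 \<le> (\<integral>x. Z x * (\<xi> x - X x) * indicator A x \<partial>M)" .
qed

lemma cond_dominates_paste_restrict:
  assumes "A \<in> sets G" "cond_dominates Z \<xi> (\<lambda>y. X y * indicator A y)"
  shows "cond_dominates Z (paste M A \<xi> X) X"
  unfolding cond_dominates_def
proof
  fix C assume "C \<in> sets G"
  then have "0 \<le> (\<integral>x. Z x * (\<xi> x - X x * indicator A x) * indicator (C \<inter> A) x \<partial>M)"
    using assms unfolding cond_dominates_def by blast
  also have "\<dots> = (\<integral>x. Z x * (paste M A \<xi> X x - X x) * indicator C x \<partial>M)"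
    by (rule Bochner_Integration.integral_cong) (auto simp: paste_def indicator_def)
  finally show "0 \<le> \<dots>" .
qed
lemma cond_dominates_restrict:
  assumes "A \<in> sets G" "cond_dominates Z \<xi> X"
  shows "cond_dominates Z (paste M A \<xi> (\<lambda>_. 0)) (\<lambda>y. X y * indicator A y)"
  unfolding cond_dominates_def
proof
  fix C assume "C \<in> sets G"
  then have "0 \<le> (\<integral>x. Z x * (\<xi> x - X x) * indicator (C \<inter> A) x \<partial>M)"
    using assms unfolding cond_dominates_def by blast
  also have "\<dots> = (\<integral>x. Z x * (paste M A \<xi> (\<lambda>_. 0) x - X x * indicator A x) * indicator C x \<partial>M)"
    by (rule Bochner_Integration.integral_cong) (auto simp: paste_def indicator_def)
  finally show "0 \<le> \<dots>" .
qed

definition K_family :: "('a \<Rightarrow> real) \<Rightarrow> ('a \<Rightarrow> real) \<Rightarrow> ('a \<Rightarrow> ereal) set" where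
  "K_family X Z = {(\<lambda>x. ereal (\<pi> \<xi> x)) | \<xi>. \<xi> \<in> LF \<and> cond_dominates Z \<xi> X}"

lemma Kfun_eq_ess_inf_fam:
  assumes "Z \<in> dual_probs" "X \<in> LF"
  shows "K X Z = ess_inf_fam M (K_family X Z)"
proof -
  have "{(\<lambda>x. ereal (\<pi> \<xi> x)) | \<xi>. \<xi> \<in> LF \<and>
          (AE x in dens_meas M Z. real_cond_exp (dens_meas M Z) G \<xi> x
                                   \<ge> real_cond_exp (dens_meas M Z) G X x)} = K_family X Z"
    unfolding K_family_def by (auto simp: AE_cond_exp_ge_iff_cond_dominates[OF assms])
  then show ?thesis
    by (simp add: Kfun_def)
qed

lemma K_family_directed:
  assumes Z: "Z \<in> dual_probs" and X: "X \<in> LF"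
    and "u \<in> K_family X Z" "v \<in> K_family X Z"
  shows "\<exists>w\<in>K_family X Z. AE x in M. w x \<le> u x \<and> w x \<le> v x"
proof -
  obtain \<xi>\<^sub>1 \<xi>\<^sub>2 where \<xi>: "\<xi>\<^sub>1 \<in> LF" "\<xi>\<^sub>2 \<in> LF" "cond_dominates Z \<xi>\<^sub>1 X" "cond_dominates Z \<xi>\<^sub>2 X"
    and uv: "u = (\<lambda>x. ereal (\<pi> \<xi>\<^sub>1 x))" "v = (\<lambda>x. ereal (\<pi> \<xi>\<^sub>2 x))"
    using assms(3,4) unfolding K_family_def by blast
  define B where "B = {x \<in> space M. \<pi> \<xi>\<^sub>1 x \<le> \<pi> \<xi>\<^sub>2 x}"
  have [measurable]: "\<pi> \<xi>\<^sub>1 \<in> borel_measurable G" "\<pi> \<xi>\<^sub>2 \<in> borel_measurable G"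
    using \<xi> measurable_\<pi> by blast+
  have "B = {x \<in> space G. \<pi> \<xi>\<^sub>1 x \<le> \<pi> \<xi>\<^sub>2 x}"
    by (simp add: B_def space_G)
  also have "\<dots> \<in> sets G"
    by measurable
  finally have B: "B \<in> sets G" .
  let ?\<xi> = "paste M B \<xi>\<^sub>1 \<xi>\<^sub>2"
  have "?\<xi> \<in> LF"
    using \<xi> B by (intro vec_lattice_paste lattice_LF sets_G_sets_M)
  moreover have "cond_dominates Z ?\<xi> X"
    using Z X \<xi>(1,2) B \<xi>(3,4) by (rule cond_dominates_paste)
  ultimately have w: "(\<lambda>x. ereal (\<pi> ?\<xi> x)) \<in> K_family X Z"
    unfolding K_family_def by blast
  have "AE x in M. \<pi> ?\<xi> x = min (\<pi> \<xi>\<^sub>1 x) (\<pi> \<xi>\<^sub>2 x)"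
    using \<pi>_paste_on[OF B \<xi>(1,2)] AE_space by eventually_elim (simp add: B_def min_def)
  then have "AE x in M. ereal (\<pi> ?\<xi> x) \<le> u x \<and> ereal (\<pi> ?\<xi> x) \<le> v x"
    by eventually_elim (simp add: uv)
  from this w show ?thesis
    by (rule bexI)
qed

lemma Kfun_eq_INF_decseq:
  assumes Z: "Z \<in> dual_probs" and X: "X \<in> LF"
  obtains \<xi> :: "nat \<Rightarrow> 'a \<Rightarrow> real"
  where "\<And>m. \<xi> m \<in> LF" "\<And>m. cond_dominates Z (\<xi> m) X"
    "is_ess_inf M (K_family X Z) (K X Z)"
    "AE x in M. decseq (\<lambda>m. ereal (\<pi> (\<xi> m) x)) \<and> K X Z x = (INF m. ereal (\<pi> (\<xi> m) x))"
proof -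
  have "K_family X Z \<noteq> {}"
    using X cond_dominates_refl unfolding K_family_def by blast
  moreover have "K_family X Z \<subseteq> borel_measurable M"
    using borel_measurable_\<pi> unfolding K_family_def by auto
  ultimately obtain g where g: "range g \<subseteq> K_family X Z"
    and inf: "is_ess_inf M (K_family X Z) (ess_inf_fam M (K_family X Z))"
    and lim: "AE x in M. decseq (\<lambda>n. g n x) \<and> ess_inf_fam M (K_family X Z) x = (INF n. g n x)"
    using K_family_directed[OF Z X] by (rule ess_inf_fam_directed)
  have "g m \<in> K_family X Z" for m
    using g by blast
  then have "\<forall>m. \<exists>\<xi>. \<xi> \<in> LF \<and> cond_dominates Z \<xi> X \<and> g m = (\<lambda>x. ereal (\<pi> \<xi> x))"
    unfolding K_family_def by blast
  then obtain \<xi> where \<xi>: "\<And>m. \<xi> m \<in> LF" "\<And>m. cond_dominates Z (\<xi> m) X"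
    and g_eq: "\<And>m. g m = (\<lambda>x. ereal (\<pi> (\<xi> m) x))"
    by metis
  show thesis
    using \<xi> inf lim unfolding g_eq Kfun_eq_ess_inf_fam[OF Z X, symmetric] by (rule that)
qed

lemma Kfun_G_measurable_version:
  assumes "Z \<in> dual_probs" "X \<in> LF"
  obtains k where "k \<in> borel_measurable G" "AE x in M. k x = K X Z x"
proof (rule Kfun_eq_INF_decseq[OF assms])
  fix \<xi> :: "nat \<Rightarrow> 'a \<Rightarrow> real"
  assume \<xi>: "\<And>m. \<xi> m \<in> LF"
    and lim: "AE x in M. decseq (\<lambda>m. ereal (\<pi> (\<xi> m) x)) \<and> K X Z x = (INF m. ereal (\<pi> (\<xi> m) x))"
  have [measurable]: "\<pi> (\<xi> m) \<in> borel_measurable G" for m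
    using \<xi> by (rule measurable_\<pi>)
  have "(\<lambda>x. INF m. ereal (\<pi> (\<xi> m) x)) \<in> borel_measurable G"
    by measurable
  moreover have "AE x in M. (INF m. ereal (\<pi> (\<xi> m) x)) = K X Z x"
    using lim by eventually_elim simp
  ultimately show thesis
    by (rule that)
qed

lemma is_ess_inf_Kfun:
  assumes "Z \<in> dual_probs" "X \<in> LF"
  shows "is_ess_inf M (K_family X Z) (K X Z)"
  by (rule Kfun_eq_INF_decseq[OF assms])

lemma Kfun_le_on:
  assumes Z: "Z \<in> dual_probs" "Z' \<in> dual_probs" and X: "X \<in> LF" "X' \<in> LF" and B: "B \<in> sets M"
    and improve: "\<And>\<xi>. \<xi> \<in> LF \<Longrightarrow> cond_dominates Z \<xi> X \<Longrightarrow>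
      \<exists>\<xi>'\<in>LF. cond_dominates Z' \<xi>' X' \<and> (AE x in M. x \<in> B \<longrightarrow> \<pi> \<xi>' x \<le> \<pi> \<xi> x)"
  shows "AE x in M. x \<in> B \<longrightarrow> K X' Z' x \<le> K X Z x"
proof (rule is_ess_inf_le_on[OF is_ess_inf_Kfun is_ess_inf_Kfun B])
  fix u assume "u \<in> K_family X Z"
  then obtain \<xi> where \<xi>: "\<xi> \<in> LF" "cond_dominates Z \<xi> X" and u: "u = (\<lambda>x. ereal (\<pi> \<xi> x))"
    unfolding K_family_def by blast
  obtain \<xi>' where "\<xi>' \<in> LF" "cond_dominates Z' \<xi>' X'"
    and le: "AE x in M. x \<in> B \<longrightarrow> \<pi> \<xi>' x \<le> \<pi> \<xi> x"
    using improve[OF \<xi>] by blast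
  then have "(\<lambda>x. ereal (\<pi> \<xi>' x)) \<in> K_family X' Z'"
    unfolding K_family_def by blast
  with le show "\<exists>v\<in>K_family X' Z'. AE x in M. x \<in> B \<longrightarrow> v x \<le> u x"
    unfolding u by (intro bexI) (auto elim: eventually_mono)
qed (use Z X in auto)

lemma Kfun_mono:
  assumes Z: "Z \<in> dual_probs" and X: "X \<in> LF" "Y \<in> LF" and le: "AE x in M. X x \<le> Y x"
  shows "AE x in M. K X Z x \<le> K Y Z x"
proof -
  have "AE x in M. x \<in> space M \<longrightarrow> K X Z x \<le> K Y Z x"
  proof (rule Kfun_le_on[OF Z Z X(2,1) sets.top])
    fix \<xi> assume "\<xi> \<in> LF" "cond_dominates Z \<xi> Y"
    then show "\<exists>\<xi>'\<in>LF. cond_dominates Z \<xi>' X \<and> (AE x in M. x \<in> space M \<longrightarrow> \<pi> \<xi>' x \<le> \<pi> \<xi> x)"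
      using cond_dominates_antimono[OF Z X _ le] by blast
  qed
  with AE_space show ?thesis
    by eventually_elim simp
qed

lemma Kfun_rescale_le_on:
  assumes Z: "Z \<in> dual_probs" "Z' \<in> dual_probs" and X: "X \<in> LF" and B: "B \<in> sets G"
    and "0 \<le> c" and "AE x in M. x \<in> B \<longrightarrow> Z' x = c * Z x"
  shows "AE x in M. x \<in> B \<longrightarrow> K X Z' x \<le> K X Z x"
proof (rule Kfun_le_on[OF Z X X sets_G_sets_M[OF B]])
  fix \<xi> assume \<xi>: "\<xi> \<in> LF" "cond_dominates Z \<xi> X"
  have "paste M B \<xi> X \<in> LF"
    using \<xi> X B by (intro vec_lattice_paste lattice_LF sets_G_sets_M)
  moreover have "cond_dominates Z' (paste M B \<xi> X) X"
    using Z X \<xi>(1) B assms(5,6) \<xi>(2) by (rule cond_dominates_paste_rescaled)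
  moreover have "AE x in M. x \<in> B \<longrightarrow> \<pi> (paste M B \<xi> X) x \<le> \<pi> \<xi> x"
    using \<pi>_paste_on[OF B \<xi>(1) X] by eventually_elim simp
  ultimately show "\<exists>\<xi>'\<in>LF. cond_dominates Z' \<xi>' X \<and> (AE x in M. x \<in> B \<longrightarrow> \<pi> \<xi>' x \<le> \<pi> \<xi> x)"
    by blast
qed

lemma Kfun_restrict:
  assumes Z: "Z \<in> dual_probs" and X: "X \<in> LF" and A: "A \<in> sets G"
  shows "AE x in M. x \<in> A \<longrightarrow> K (\<lambda>y. X y * indicator A y) Z x = K X Z x"
proof -
  let ?XA = "\<lambda>y. X y * indicator A y"
  have XA: "?XA \<in> LF"
    using X A by (intro vec_lattice_mult_indicator[OF lattice_LF] sets_G_sets_M)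
  have "AE x in M. x \<in> A \<longrightarrow> K X Z x \<le> K ?XA Z x"
  proof (rule Kfun_le_on[OF Z Z XA X sets_G_sets_M[OF A]])
    fix \<xi> assume \<xi>: "\<xi> \<in> LF" "cond_dominates Z \<xi> ?XA"
    have "paste M A \<xi> X \<in> LF"
      using \<xi> X A by (intro vec_lattice_paste lattice_LF sets_G_sets_M)
    moreover have "cond_dominates Z (paste M A \<xi> X) X"
      using A \<xi>(2) by (rule cond_dominates_paste_restrict)
    moreover have "AE x in M. x \<in> A \<longrightarrow> \<pi> (paste M A \<xi> X) x \<le> \<pi> \<xi> x"
      using \<pi>_paste_on[OF A \<xi>(1) X] by eventually_elim simp
    ultimately show "\<exists>\<xi>'\<in>LF. cond_dominates Z \<xi>' X \<and> (AE x in M. x \<in> A \<longrightarrow> \<pi> \<xi>' x \<le> \<pi> \<xi> x)"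
      by blast
  qed
  moreover have "AE x in M. x \<in> A \<longrightarrow> K ?XA Z x \<le> K X Z x"
  proof (rule Kfun_le_on[OF Z Z X XA sets_G_sets_M[OF A]])
    fix \<xi> assume \<xi>: "\<xi> \<in> LF" "cond_dominates Z \<xi> X"
    have "paste M A \<xi> (\<lambda>_. 0) \<in> LF"
      using \<xi> A by (intro vec_lattice_paste lattice_LF sets_G_sets_M vec_lattice_zero[OF lattice_LF])
    moreover have "cond_dominates Z (paste M A \<xi> (\<lambda>_. 0)) ?XA"
      using A \<xi>(2) by (rule cond_dominates_restrict)
    moreover have "AE x in M. x \<in> A \<longrightarrow> \<pi> (paste M A \<xi> (\<lambda>_. 0)) x \<le> \<pi> \<xi> x"
      using \<pi>_paste_on[OF A \<xi>(1) vec_lattice_zero[OF lattice_LF]] by eventually_elim simp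
    ultimately show "\<exists>\<xi>'\<in>LF. cond_dominates Z \<xi>' ?XA \<and> (AE x in M. x \<in> A \<longrightarrow> \<pi> \<xi>' x \<le> \<pi> \<xi> x)"
      by blast
  qed
  ultimately show ?thesis
    by eventually_elim auto
qed

lemma nonneg_dual_eq_scaled_dual_prob:
  assumes W: "W \<in> oc_dual M LF" and W_nonneg: "AE x in M. 0 \<le> W x"
  obtains Z c where "Z \<in> dual_probs" "0 \<le> c" "AE x in M. W x = c * Z x"
proof -
  have [measurable]: "W \<in> borel_measurable M" and W_int: "integrable M W"
    using W by (auto simp: oc_dual_def)
  define c where "c = (\<integral>x. W x \<partial>M)"
  have "0 \<le> c"
    unfolding c_def using W_nonneg by (rule integral_nonneg_AE)
  show thesis
  proof (cases "c = 0")
    case True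
    obtain Z where "Z \<in> dual_probs"
      using dual_probs_nonempty by blast
    moreover have "AE x in M. W x = 0 * Z x"
      using True integral_nonneg_eq_0_iff_AE[OF W_int W_nonneg] by (simp add: c_def)
    ultimately show thesis
      using that[of Z 0] by simp
  next
    case False
    define Z where "Z x = W x / c" for x
    have "Z \<in> oc_dual M LF"
      unfolding Z_def divide_inverse mult.commute[of _ "inverse c"]
      using W by (rule vec_lattice_cmult[OF lattice_dual])
    moreover have "Z \<in> prob_densities M"
      unfolding prob_densities_def
    proof (intro CollectI conjI)
      show "Z \<in> borel_measurable M"
        unfolding Z_def by measurable
      show "AE x in M. 0 \<le> Z x"
        using W_nonneg by eventually_elim (simp add: Z_def \<open>0 \<le> c\<close>)
      show "(\<integral>x. Z x \<partial>M) = 1"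
        using False by (simp add: Z_def c_def)
    qed
    moreover have "AE x in M. W x = c * Z x"
      using False by (simp add: Z_def)
    ultimately show thesis
      using \<open>0 \<le> c\<close> by (intro that) auto
  qed
qed

lemma dual_probs_paste:
  assumes Z: "Z\<^sub>1 \<in> dual_probs" "Z\<^sub>2 \<in> dual_probs" and B: "B \<in> sets M"
  obtains Z c where "Z \<in> dual_probs" "0 \<le> c" "AE x in M. paste M B Z\<^sub>1 Z\<^sub>2 x = c * Z x"
proof (rule nonneg_dual_eq_scaled_dual_prob)
  show "paste M B Z\<^sub>1 Z\<^sub>2 \<in> oc_dual M LF"
    using Z B by (intro vec_lattice_paste lattice_dual) auto
  show "AE x in M. 0 \<le> paste M B Z\<^sub>1 Z\<^sub>2 x"
    using dual_probs_nonneg[OF Z(1)] dual_probs_nonneg[OF Z(2)] AE_space by eventually_elim simp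
qed (rule that)

definition H_family :: "('a \<Rightarrow> real) \<Rightarrow> ('a \<Rightarrow> ereal) set" where
  "H_family X = {K X Z | Z. Z \<in> dual_probs}"

lemma Hfun_eq_ess_sup_fam: "H X = ess_sup_fam M (H_family X)"
  by (simp add: Hfun_def H_family_def)

lemma H_family_directed:
  assumes X: "X \<in> LF" and "u \<in> H_family X" "v \<in> H_family X"
  shows "\<exists>w\<in>H_family X. AE x in M. u x \<le> w x \<and> v x \<le> w x"
proof -
  obtain Z\<^sub>1 Z\<^sub>2 where Z: "Z\<^sub>1 \<in> dual_probs" "Z\<^sub>2 \<in> dual_probs" and uv: "u = K X Z\<^sub>1" "v = K X Z\<^sub>2"
    using assms(2,3) unfolding H_family_def by blast
  obtain k\<^sub>1 where [measurable]: "k\<^sub>1 \<in> borel_measurable G" and k\<^sub>1: "AE x in M. k\<^sub>1 x = K X Z\<^sub>1 x"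
    using Kfun_G_measurable_version[OF Z(1) X] by blast
  obtain k\<^sub>2 where [measurable]: "k\<^sub>2 \<in> borel_measurable G" and k\<^sub>2: "AE x in M. k\<^sub>2 x = K X Z\<^sub>2 x"
    using Kfun_G_measurable_version[OF Z(2) X] by blast
  define B where "B = {x \<in> space M. k\<^sub>2 x \<le> k\<^sub>1 x}"
  have B: "B \<in> sets G"
    unfolding B_def space_G[symmetric] by measurable
  have B': "space M - B \<in> sets G"
    using B unfolding space_G[symmetric] by blast
  obtain Z c where Z_dual: "Z \<in> dual_probs" and "0 \<le> c"
    and Z_eq: "AE x in M. paste M B Z\<^sub>1 Z\<^sub>2 x = c * Z x"
    using dual_probs_paste[OF Z sets_G_sets_M[OF B]] .
  have "AE x in M. x \<in> B \<longrightarrow> K X Z\<^sub>1 x \<le> K X Z x"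
    using Z_eq AE_space
    by (intro Kfun_rescale_le_on[OF Z_dual Z(1) X B \<open>0 \<le> c\<close>]) (auto elim!: eventually_rev_mp)
  moreover have "AE x in M. x \<in> space M - B \<longrightarrow> K X Z\<^sub>2 x \<le> K X Z x"
    using Z_eq AE_space
    by (intro Kfun_rescale_le_on[OF Z_dual Z(2) X B' \<open>0 \<le> c\<close>]) (auto elim!: eventually_rev_mp)
  ultimately have "AE x in M. K X Z\<^sub>1 x \<le> K X Z x \<and> K X Z\<^sub>2 x \<le> K X Z x"
    using k\<^sub>1 k\<^sub>2 AE_space by eventually_elim (force simp: B_def)
  moreover have "K X Z \<in> H_family X"
    using Z_dual unfolding H_family_def by blast
  ultimately show ?thesis
    unfolding uv by (rule bexI)
qed

lemma Hfun_eq_SUP_incseq: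
  assumes X: "X \<in> LF"
  obtains Q :: "nat \<Rightarrow> 'a \<Rightarrow> real"
  where "\<And>k. Q k \<in> dual_probs" "is_ess_sup M (H_family X) (H X)"
    "AE x in M. incseq (\<lambda>k. K X (Q k) x) \<and> H X x = (SUP k. K X (Q k) x)"
proof -
  have "H_family X \<noteq> {}"
    using dual_probs_nonempty unfolding H_family_def by blast
  moreover have "H_family X \<subseteq> borel_measurable M"
    using is_ess_inf_Kfun[OF _ X] unfolding H_family_def is_ess_inf_def by blast
  ultimately obtain g where g: "range g \<subseteq> H_family X"
    and sup: "is_ess_sup M (H_family X) (ess_sup_fam M (H_family X))"
    and lim: "AE x in M. incseq (\<lambda>n. g n x) \<and> ess_sup_fam M (H_family X) x = (SUP n. g n x)"
    using H_family_directed[OF X] by (rule ess_sup_fam_directed)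
  have "g k \<in> H_family X" for k
    using g by blast
  then have "\<forall>k. \<exists>Z. Z \<in> dual_probs \<and> g k = K X Z"
    unfolding H_family_def by blast
  then obtain Q where Q: "\<And>k. Q k \<in> dual_probs" and g_eq: "\<And>k. g k = K X (Q k)"
    by metis
  show thesis
    using Q sup lim unfolding g_eq Hfun_eq_ess_sup_fam[symmetric] by (rule that)
qed

lemma is_ess_sup_Hfun:
  assumes "X \<in> LF"
  shows "is_ess_sup M (H_family X) (H X)"
  by (rule Hfun_eq_SUP_incseq[OF assms])

lemma Hfun_le_on:
  assumes X: "X \<in> LF" "X' \<in> LF" and B: "B \<in> sets M"
    and le: "\<And>Z. Z \<in> dual_probs \<Longrightarrow> AE x in M. x \<in> B \<longrightarrow> K X Z x \<le> K X' Z x"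
  shows "AE x in M. x \<in> B \<longrightarrow> H X x \<le> H X' x"
proof (rule is_ess_sup_le_on[OF is_ess_sup_Hfun[OF X(1)] is_ess_sup_Hfun[OF X(2)] B])
  fix u assume "u \<in> H_family X"
  then obtain Z where "Z \<in> dual_probs" and u: "u = K X Z"
    unfolding H_family_def by blast
  then have "K X' Z \<in> H_family X'" "AE x in M. x \<in> B \<longrightarrow> u x \<le> K X' Z x"
    using le unfolding H_family_def by auto
  then show "\<exists>v\<in>H_family X'. AE x in M. x \<in> B \<longrightarrow> u x \<le> v x"
    by blast
qed

lemma Hfun_mono:
  assumes X: "X \<in> LF" "Y \<in> LF" and "AE x in M. X x \<le> Y x"
  shows "AE x in M. H X x \<le> H Y x"
proof -
  have "AE x in M. x \<in> space M \<longrightarrow> H X x \<le> H Y x"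
    using X sets.top by (rule Hfun_le_on) (use Kfun_mono assms in auto)
  with AE_space show ?thesis
    by eventually_elim simp
qed

lemma Hfun_restrict:
  assumes X: "X \<in> LF" and A: "A \<in> sets G"
  shows "AE x in M. H (\<lambda>y. X y * indicator A y) x * indicator A x = H X x * indicator A x"
proof -
  have XA: "(\<lambda>y. X y * indicator A y) \<in> LF"
    using X A by (intro vec_lattice_mult_indicator[OF lattice_LF] sets_G_sets_M)
  have "AE x in M. x \<in> A \<longrightarrow> H (\<lambda>y. X y * indicator A y) x \<le> H X x"
  proof (rule Hfun_le_on[OF XA X sets_G_sets_M[OF A]])
    fix Z assume "Z \<in> dual_probs"
    from Kfun_restrict[OF this X A]
    show "AE x in M. x \<in> A \<longrightarrow> K (\<lambda>y. X y * indicator A y) Z x \<le> K X Z x"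
      by eventually_elim simp
  qed
  moreover have "AE x in M. x \<in> A \<longrightarrow> H X x \<le> H (\<lambda>y. X y * indicator A y) x"
  proof (rule Hfun_le_on[OF X XA sets_G_sets_M[OF A]])
    fix Z assume "Z \<in> dual_probs"
    from Kfun_restrict[OF this X A]
    show "AE x in M. x \<in> A \<longrightarrow> K X Z x \<le> K (\<lambda>y. X y * indicator A y) Z x"
      by eventually_elim simp
  qed
  ultimately show ?thesis
    by eventually_elim (auto simp: indicator_def intro: antisym)
qed

lemma Kfun_decseq_approx:
  assumes Q: "\<And>k. Q k \<in> dual_probs" and X: "X \<in> LF"
  obtains \<xi> :: "nat \<Rightarrow> nat \<Rightarrow> 'a \<Rightarrow> real"
  where "\<And>k m. \<xi> k m \<in> LF" "\<And>k m. cond_dominates (Q k) (\<xi> k m) X"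
    "\<And>k. AE x in M. decseq (\<lambda>m. ereal (\<pi> (\<xi> k m) x)) \<and>
                    (\<lambda>m. ereal (\<pi> (\<xi> k m) x)) \<longlonglongrightarrow> K X (Q k) x"
proof -
  have "\<forall>k. \<exists>\<xi>. (\<forall>m. \<xi> m \<in> LF \<and> cond_dominates (Q k) (\<xi> m) X) \<and>
      (AE x in M. decseq (\<lambda>m. ereal (\<pi> (\<xi> m) x)) \<and> K X (Q k) x = (INF m. ereal (\<pi> (\<xi> m) x)))"
  proof
    fix k
    show "\<exists>\<xi>. (\<forall>m. \<xi> m \<in> LF \<and> cond_dominates (Q k) (\<xi> m) X) \<and>
      (AE x in M. decseq (\<lambda>m. ereal (\<pi> (\<xi> m) x)) \<and> K X (Q k) x = (INF m. ereal (\<pi> (\<xi> m) x)))"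
      by (rule Kfun_eq_INF_decseq[OF Q X]) blast
  qed
  then have "\<exists>\<xi>. \<forall>k. (\<forall>m. \<xi> k m \<in> LF \<and> cond_dominates (Q k) (\<xi> k m) X) \<and>
      (AE x in M. decseq (\<lambda>m. ereal (\<pi> (\<xi> k m) x)) \<and> K X (Q k) x = (INF m. ereal (\<pi> (\<xi> k m) x)))"
    by (rule choice)
  then obtain \<xi> :: "nat \<Rightarrow> nat \<Rightarrow> 'a \<Rightarrow> real"
    where \<xi>: "\<forall>k. (\<forall>m. \<xi> k m \<in> LF \<and> cond_dominates (Q k) (\<xi> k m) X) \<and>
      (AE x in M. decseq (\<lambda>m. ereal (\<pi> (\<xi> k m) x)) \<and> K X (Q k) x = (INF m. ereal (\<pi> (\<xi> k m) x)))"
    by blast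
  have K_INF: "AE x in M. decseq (\<lambda>m. ereal (\<pi> (\<xi> k m) x)) \<and>
                           K X (Q k) x = (INF m. ereal (\<pi> (\<xi> k m) x))" for k
    using \<xi> by blast
  have "\<xi> k m \<in> LF" "cond_dominates (Q k) (\<xi> k m) X" for k m
    using \<xi> by blast+
  moreover have "AE x in M. decseq (\<lambda>m. ereal (\<pi> (\<xi> k m) x)) \<and>
                  (\<lambda>m. ereal (\<pi> (\<xi> k m) x)) \<longlonglongrightarrow> K X (Q k) x" for k
    using K_INF[of k] by eventually_elim (simp add: LIMSEQ_INF)
  ultimately show thesis
    by (rule that)
qed

lemma Hfun_approx:
  assumes X: "X \<in> LF"
  shows "\<exists>(Q :: nat \<Rightarrow> 'a \<Rightarrow> real) (\<xi> :: nat \<Rightarrow> nat \<Rightarrow> 'a \<Rightarrow> real).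
    (\<forall>k. Q k \<in> dual_probs) \<and>
    (\<forall>k m. \<xi> k m \<in> LF \<and>
       (AE x in dens_meas M (Q k). real_cond_exp (dens_meas M (Q k)) G (\<xi> k m) x
                                    \<ge> real_cond_exp (dens_meas M (Q k)) G X x)) \<and>
    (\<forall>k. AE x in M. decseq (\<lambda>m. ereal (\<pi> (\<xi> k m) x)) \<and>
                   (\<lambda>m. ereal (\<pi> (\<xi> k m) x)) \<longlonglongrightarrow> K X (Q k) x) \<and>
    (AE x in M. incseq (\<lambda>k. K X (Q k) x) \<and> (\<lambda>k. K X (Q k) x) \<longlonglongrightarrow> H X x) \<and>
    (AE x in M. H X x = lim (\<lambda>k. lim (\<lambda>m. ereal (\<pi> (\<xi> k m) x))))"
proof (rule Hfun_eq_SUP_incseq[OF X])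
  fix Q :: "nat \<Rightarrow> 'a \<Rightarrow> real"
  assume Q: "\<And>k. Q k \<in> dual_probs"
    and H_SUP: "AE x in M. incseq (\<lambda>k. K X (Q k) x) \<and> H X x = (SUP k. K X (Q k) x)"
  have outer: "AE x in M. incseq (\<lambda>k. K X (Q k) x) \<and> (\<lambda>k. K X (Q k) x) \<longlonglongrightarrow> H X x"
    using H_SUP by eventually_elim (simp add: LIMSEQ_SUP)
  show ?thesis
  proof (rule Kfun_decseq_approx[OF Q X])
    fix \<xi> :: "nat \<Rightarrow> nat \<Rightarrow> 'a \<Rightarrow> real"
    assume \<xi>: "\<And>k m. \<xi> k m \<in> LF" "\<And>k m. cond_dominates (Q k) (\<xi> k m) X"
      and inner: "\<And>k. AE x in M. decseq (\<lambda>m. ereal (\<pi> (\<xi> k m) x)) \<and>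
                                  (\<lambda>m. ereal (\<pi> (\<xi> k m) x)) \<longlonglongrightarrow> K X (Q k) x"
    have "AE x in M. \<forall>k. (\<lambda>m. ereal (\<pi> (\<xi> k m) x)) \<longlonglongrightarrow> K X (Q k) x"
      using inner by (auto simp: AE_all_countable elim: eventually_mono)
    with outer have "AE x in M. H X x = lim (\<lambda>k. lim (\<lambda>m. ereal (\<pi> (\<xi> k m) x)))"
    proof eventually_elim
      case (elim x)
      then have "(\<lambda>k. lim (\<lambda>m. ereal (\<pi> (\<xi> k m) x))) = (\<lambda>k. K X (Q k) x)"
        by (auto intro: limI)
      with elim show ?case
        by (auto intro: limI[symmetric])
    qed
    moreover have "AE x in dens_meas M (Q k). real_cond_exp (dens_meas M (Q k)) G (\<xi> k m) x
                                             \<ge> real_cond_exp (dens_meas M (Q k)) G X x" for k m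
      using AE_cond_exp_ge_iff_cond_dominates[OF Q X \<xi>(1)] \<xi>(2) by blast
    ultimately show ?thesis
      using Q \<xi>(1) inner outer by (intro exI[of _ Q] exI[of _ \<xi>]) blast
  qed
qed

end

theorem lemma20:
  fixes M G :: "'a measure"
    and LF LG :: "('a \<Rightarrow> real) set"
    and \<pi> :: "('a \<Rightarrow> real) \<Rightarrow> ('a \<Rightarrow> real)"
  assumes P: "prob_space M"
    and G: "subalgebra M G"
    and LF: "vec_lattice M M LF"
    and LG: "vec_lattice M G LG"
    and dual: "vec_lattice M M (oc_dual M LF)"
    and nonempty: "oc_dual M LF \<inter> prob_densities M \<noteq> {}"
    and maps: "\<forall>X\<in>LF. \<pi> X \<in> LG"
    and welldef: "\<forall>X\<in>LF. \<forall>Y\<in>LF. (AE x in M. X x = Y x) \<longrightarrow> (AE x in M. \<pi> X x = \<pi> Y x)"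
    and REG: "\<forall>A\<in>sets G. \<forall>X\<in>LF. \<forall>Y\<in>LF.
       AE x in M. \<pi> (\<lambda>y. X y * indicator A y + Y y * indicator (space M - A) y) x
                  = \<pi> X x * indicator A x + \<pi> Y x * indicator (space M - A) x"
  shows
    "(\<forall>X\<in>LF. \<forall>Y\<in>LF. (AE x in M. X x \<le> Y x) \<longrightarrow>
        (AE x in M. Hfun M G \<pi> LF X x \<le> Hfun M G \<pi> LF Y x))
   \<and> (\<forall>A\<in>sets G. \<forall>X\<in>LF. AE x in M.
        Hfun M G \<pi> LF (\<lambda>y. X y * indicator A y) x * indicator A x
          = Hfun M G \<pi> LF X x * indicator A x)
   \<and> (\<forall>X\<in>LF. \<exists>Q :: nat \<Rightarrow> ('a \<Rightarrow> real). \<exists>\<xi> :: nat \<Rightarrow> nat \<Rightarrow> ('a \<Rightarrow> real).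
        (\<forall>k. Q k \<in> oc_dual M LF \<inter> prob_densities M) \<and>
        (\<forall>k m. \<xi> k m \<in> LF \<and>
           (AE x in dens_meas M (Q k). real_cond_exp (dens_meas M (Q k)) G (\<xi> k m) x
                                        \<ge> real_cond_exp (dens_meas M (Q k)) G X x)) \<and>
        (\<forall>k. AE x in M. decseq (\<lambda>m. ereal (\<pi> (\<xi> k m) x)) \<and>
                 (\<lambda>m. ereal (\<pi> (\<xi> k m) x)) \<longlonglongrightarrow> Kfun M G \<pi> LF X (Q k) x) \<and>
        (AE x in M. incseq (\<lambda>k. Kfun M G \<pi> LF X (Q k) x) \<and>
                 (\<lambda>k. Kfun M G \<pi> LF X (Q k) x) \<longlonglongrightarrow> Hfun M G \<pi> LF X x) \<and>
        (AE x in M. Hfun M G \<pi> LF X x = lim (\<lambda>k. lim (\<lambda>m. ereal (\<pi> (\<xi> k m) x)))))"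
proof -
  interpret regular_map M G LF \<pi>
  proof (rule regular_map.intro)
    show "\<pi> X \<in> borel_measurable G" if "X \<in> LF" for X
      using maps that LG by (blast intro: vec_lattice_borel_measurable)
    show "AE x in M. \<pi> (paste M A X Y) x = paste M A (\<pi> X) (\<pi> Y) x"
      if "A \<in> sets G" "X \<in> LF" "Y \<in> LF" for A X Y
      using REG that by (simp add: paste_def)
  qed (fact P G LF dual nonempty)+
  show ?thesis
    using Hfun_mono Hfun_restrict Hfun_approx by blast
qed

end
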